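(* The pair $(M_{\psi_1},M_{\psi_2})$ on $H^2_{\mathbb D}(\ell^2(\mathbb Z))$ is jointly unitarily equivalent to $(\tau_1,\tau_2)$ on $H^2_{\mathbb D^2}$. In particular, $\sigma(M_{\psi_1},M_{\psi_2})=\overline{\mathbb D^2}$, and for every point $(\lambda_1,\lambda_2)\in\mathbb D^2$ the non-singularity of the Koszul complex of $(M_{\psi_1}-\lambda_1I,M_{\psi_2}-\lambda_2I)$ breaks at stage 2.
   Context: On $\ell^2(\mathbb Z)$ with standard basis $\{e_n\}$, $\omega e_n=e_{n+1}$ is the bilateral shift, $p_-$ the projection onto $\overline{\operatorname{span}}\{e_n:n<0\}$, $p_-^\perp=I-p_-$, $\psi_1(z)=\omega^*(p_-^\perp+zp_-)$, $\psi_2(z)=(p_-+zp_-^\perp)\omega$ for $z\in\mathbb D$; $M_{\psi_i}$ are the multiplication operators on the $\ell^2(\mathbb Z)$-valued Hardy space $H^2_{\mathbb D}(\ell^2(\mathbb Z))$ of the disc. $H^2_{\mathbb D^2}$ is the Hardy space of the bidisc with orthonormal basis $\{z_1^{m_1}z_2^{m_2}\}$; $U$ is the unitary on it with $U(z_1^{m_1}z_2^{m_2})=z_1^{m_1+2}z_2^{m_2}$ if $m_1\ge m_2$, $=z_1^{m_1+1}z_2^{m_2-1}$ if $m_1+1=m_2$, $=z_1^{m_1}z_2^{m_2-2}$ if $m_1+2\le m_2$; $\tau_1=U^*M_{z_1}$, $\tau_2=M_{z_2}U$. Koszul complex of commuting $T_1,T_2$: $0\xrightarrow{\delta_0}\mathcal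 H\xrightarrow{\delta_1}\mathcal H\oplus\mathcal H\xrightarrow{\delta_2}\mathcal H\xrightarrow{\delta_3}0$, $\delta_1h=(T_1h,T_2h)$, $\delta_2(h_1,h_2)=T_1h_2-T_2h_1$; $\sigma$ is the Taylor joint spectrum; breaking at stage $n$ means $\operatorname{ran}\delta_{n-1}\neq\ker\delta_n$. *)

theory Defs
  imports "HOL-Analysis.Analysis" "HOL-Library.Function_Algebras"
begin

text \<open>Vectors of l2(Z) are functions int => complex; e_n is the indicator of n.\<close>

definition l2Z :: "(int \<Rightarrow> complex) set" where
  "l2Z = {x. (\<lambda>n. (cmod (x n))\<^sup>2) summable_on UNIV}"

definition l2Z_norm :: "(int \<Rightarrow> complex) \<Rightarrow> real" where
  "l2Z_norm x = sqrt (\<Sum>\<^sub>\<infinity>n. (cmod (x n))\<^sup>2)"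

text \<open>The l2(Z)-valued Hardy space of the disc, identified (as usual) with the
  sequences of Taylor coefficients: f(z) = sum_k z^k a_k with a_k in l2(Z) and
  sum_k norm(a_k)^2 finite.\<close>

definition H2D_l2Z :: "(nat \<Rightarrow> int \<Rightarrow> complex) set" where
  "H2D_l2Z = {a. (\<forall>k. a k \<in> l2Z) \<and> (\<lambda>k. (l2Z_norm (a k))\<^sup>2) summable_on UNIV}"

definition H2D_norm :: "(nat \<Rightarrow> int \<Rightarrow> complex) \<Rightarrow> real" where
  "H2D_norm a = sqrt (\<Sum>\<^sub>\<infinity>k. (l2Z_norm (a k))\<^sup>2)"

text \<open>The Hardy space of the bidisc, identified with the coefficients w.r.t. the
  orthonormal basis z1^m1 z2^m2.\<close>

definition H2D2 :: "(nat \<times> nat \<Rightarrow> complex) set" where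
  "H2D2 = {f. (\<lambda>m. (cmod (f m))\<^sup>2) summable_on UNIV}"

definition H2D2_norm :: "(nat \<times> nat \<Rightarrow> complex) \<Rightarrow> real" where
  "H2D2_norm f = sqrt (\<Sum>\<^sub>\<infinity>m. (cmod (f m))\<^sup>2)"

text \<open>Bilateral shift: omega e_n = e_(n+1), i.e. (omega x)(n) = x(n-1).\<close>
definition omega :: "(int \<Rightarrow> complex) \<Rightarrow> (int \<Rightarrow> complex)" where
  "omega x = (\<lambda>n. x (n - 1))"

definition omega_adj :: "(int \<Rightarrow> complex) \<Rightarrow> (int \<Rightarrow> complex)" where
  "omega_adj x = (\<lambda>n. x (n + 1))"

definition p_minus :: "(int \<Rightarrow> complex) \<Rightarrow> (int \<Rightarrow> complex)" where
  "p_minus x = (\<lambda>n. if n < 0 then x n else 0)"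

definition p_perp :: "(int \<Rightarrow> complex) \<Rightarrow> (int \<Rightarrow> complex)" where
  "p_perp x = (\<lambda>n. x n - p_minus x n)"

text \<open>For an operator valued affine symbol psi(z) = A + z B, the multiplication
  operator M_psi acts on Taylor coefficients by
  (M_psi a)_k = A a_k + B a_(k-1)   (with a_(-1) = 0).\<close>
definition mult_affine ::
  "((int \<Rightarrow> complex) \<Rightarrow> (int \<Rightarrow> complex)) \<Rightarrow> ((int \<Rightarrow> complex) \<Rightarrow> (int \<Rightarrow> complex))
    \<Rightarrow> (nat \<Rightarrow> int \<Rightarrow> complex) \<Rightarrow> (nat \<Rightarrow> int \<Rightarrow> complex)" where
  "mult_affine A B a = (\<lambda>k n. A (a k) n + (if k = 0 then 0 else B (a (k - 1)) n))"

text \<open>psi_1(z) = omega*(p_perp + z p_-) = omega* p_perp + z omega* p_-.\<close>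
definition M_psi1 :: "(nat \<Rightarrow> int \<Rightarrow> complex) \<Rightarrow> (nat \<Rightarrow> int \<Rightarrow> complex)" where
  "M_psi1 = mult_affine (omega_adj \<circ> p_perp) (omega_adj \<circ> p_minus)"

text \<open>psi_2(z) = (p_- + z p_perp) omega = p_- omega + z p_perp omega.\<close>
definition M_psi2 :: "(nat \<Rightarrow> int \<Rightarrow> complex) \<Rightarrow> (nat \<Rightarrow> int \<Rightarrow> complex)" where
  "M_psi2 = mult_affine (p_minus \<circ> omega) (p_perp \<circ> omega)"

definition M_z1 :: "(nat \<times> nat \<Rightarrow> complex) \<Rightarrow> (nat \<times> nat \<Rightarrow> complex)" where
  "M_z1 f = (\<lambda>(m1, m2). if m1 = 0 then 0 else f (m1 - 1, m2))"

definition M_z2 :: "(nat \<times> nat \<Rightarrow> complex) \<Rightarrow> (nat \<times> nat \<Rightarrow> complex)" where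
  "M_z2 f = (\<lambda>(m1, m2). if m2 = 0 then 0 else f (m1, m2 - 1))"

text \<open>Action of U on the basis indices: U(z1^m1 z2^m2) = z1^(fst s) z2^(snd s),
  s = U_idx (m1, m2).\<close>
definition U_idx :: "nat \<times> nat \<Rightarrow> nat \<times> nat" where
  "U_idx = (\<lambda>(m1, m2).
     if m1 \<ge> m2 then (m1 + 2, m2)
     else if m1 + 1 = m2 then (m1 + 1, m2 - 1)
     else (m1, m2 - 2))"

text \<open>U is the linear extension of its action on the basis:
  U(sum_m f(m) e_m) = sum_m f(m) e_(U_idx m), so the coefficient at n is the
  sum of f(m) over m with U_idx m = n.  Its adjoint has coefficients
  (U* f)(m) = <f, U e_m> = f(U_idx m).\<close>
definition U_op :: "(nat \<times> nat \<Rightarrow> complex) \<Rightarrow> (nat \<times> nat \<Rightarrow> complex)" where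
  "U_op f = (\<lambda>n. sum f {m. U_idx m = n})"

definition U_adj :: "(nat \<times> nat \<Rightarrow> complex) \<Rightarrow> (nat \<times> nat \<Rightarrow> complex)" where
  "U_adj f = f \<circ> U_idx"

definition tau1 :: "(nat \<times> nat \<Rightarrow> complex) \<Rightarrow> (nat \<times> nat \<Rightarrow> complex)" where
  "tau1 = U_adj \<circ> M_z1"

definition tau2 :: "(nat \<times> nat \<Rightarrow> complex) \<Rightarrow> (nat \<times> nat \<Rightarrow> complex)" where
  "tau2 = M_z2 \<circ> U_op"

definition jointly_unitarily_equivalent ::
  "((nat \<Rightarrow> int \<Rightarrow> complex) \<Rightarrow> (nat \<Rightarrow> int \<Rightarrow> complex)) \<Rightarrow>
   ((nat \<Rightarrow> int \<Rightarrow> complex) \<Rightarrow> (nat \<Rightarrow> int \<Rightarrow> complex)) \<Rightarrow>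
   ((nat \<times> nat \<Rightarrow> complex) \<Rightarrow> (nat \<times> nat \<Rightarrow> complex)) \<Rightarrow>
   ((nat \<times> nat \<Rightarrow> complex) \<Rightarrow> (nat \<times> nat \<Rightarrow> complex)) \<Rightarrow> bool" where
  "jointly_unitarily_equivalent S1 S2 T1 T2 \<longleftrightarrow>
     (\<exists>W. bij_betw W H2D_l2Z H2D2 \<and>
          (\<forall>a\<in>H2D_l2Z. \<forall>b\<in>H2D_l2Z. \<forall>c d :: complex.
              W (\<lambda>k n. c * a k n + d * b k n) = (\<lambda>m. c * W a m + d * W b m)) \<and>
          (\<forall>a\<in>H2D_l2Z. H2D2_norm (W a) = H2D_norm a) \<and>
          (\<forall>a\<in>H2D_l2Z. W (S1 a) = T1 (W a) \<and> W (S2 a) = T2 (W a)))"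

text \<open>Koszul complex 0 -> H -> H x H -> H -> 0 of a commuting pair (T1,T2) on the
  space H (a subset of a vector space 'v, here spaces of functions with pointwise
  operations): delta1 h = (T1 h, T2 h), delta2 (h1,h2) = T1 h2 - T2 h1.
  Breaking at stage n (n = 1,2,3) means ran delta_(n-1) ~= ker delta_n.\<close>
definition koszul_breaks_at ::
  "('v::ab_group_add) set \<Rightarrow> ('v \<Rightarrow> 'v) \<Rightarrow> ('v \<Rightarrow> 'v) \<Rightarrow> nat \<Rightarrow> bool" where
  "koszul_breaks_at H T1 T2 n \<longleftrightarrow>
     (if n = 1 then {0} \<noteq> {h\<in>H. T1 h = 0 \<and> T2 h = 0}
      else if n = 2 then (\<lambda>h. (T1 h, T2 h)) ` H \<noteq>
             {(h1, h2). h1 \<in> H \<and> h2 \<in> H \<and> T1 h2 - T2 h1 = 0}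
      else if n = 3 then (\<lambda>(h1, h2). T1 h2 - T2 h1) ` (H \<times> H) \<noteq> H
      else False)"

definition op_minus_scalar ::
  "((nat \<Rightarrow> int \<Rightarrow> complex) \<Rightarrow> (nat \<Rightarrow> int \<Rightarrow> complex)) \<Rightarrow> complex
     \<Rightarrow> (nat \<Rightarrow> int \<Rightarrow> complex) \<Rightarrow> (nat \<Rightarrow> int \<Rightarrow> complex)" where
  "op_minus_scalar T l = (\<lambda>a k n. T a k n - l * a k n)"

definition taylor_spectrum ::
  "(nat \<Rightarrow> int \<Rightarrow> complex) set \<Rightarrow>
   ((nat \<Rightarrow> int \<Rightarrow> complex) \<Rightarrow> (nat \<Rightarrow> int \<Rightarrow> complex)) \<Rightarrow>
   ((nat \<Rightarrow> int \<Rightarrow> complex) \<Rightarrow> (nat \<Rightarrow> int \<Rightarrow> complex)) \<Rightarrow> (complex \<times> complex) set" where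
  "taylor_spectrum H T1 T2 =
     {(l1, l2). \<exists>n\<in>{1, 2, 3}.
        koszul_breaks_at H (op_minus_scalar T1 l1) (op_minus_scalar T2 l2) n}"

end

theory Submission
  imports Defs
begin

(*
  Index the Taylor coefficients of H^2_D(l^2(Z)) by (k, n) in N x Z.  Then M_psi1 and M_psi2 are
  composition operators with injective partial index maps (bilateral shifts that wrap around
  into the next Taylor coefficient), and (k, n) |-> z1^(k + max n 0) z2^(k + max (-n) 0)
  carries them onto tau1 and tau2.  The reflection n |-> -n - 2 intertwines M_psi1 with M_psi2,
  so the spectral picture is symmetric in (lambda1, lambda2).

  If |lambda1| > 1, then M_psi1 - lambda1 is invertible by a Neumann series, since a composition
  operator with an injective partial map is a contraction; hence the Koszul complex is exact.
  On the closed bidisc explicit vectors break it.  For |lambda1|, |lambda2| < 1, geometric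
  sequences on the first row give a cycle which is not a boundary, since a preimage would grow
  exponentially along an antidiagonal.  For |lambda1| = 1 > |lambda2|, summing along diagonals
  against powers of lambda2 kills the range of M_psi2 - lambda2 and turns surjectivity into a
  recurrence whose solutions grow like the harmonic series.  On the torus, a unimodular phase
  reduces M_psi_i - lambda_i to M_psi_i - 1, which maps a "tent" of infinite norm into
  H^2_D(l^2(Z)); as the joint kernel is trivial, the image pair is a cycle but no boundary.
*)

section \<open>Scalar series\<close>

lemma summable_inverse_Suc_square: "summable (\<lambda>j. 1 / real (Suc j) ^ 2)"
proof -
  have "summable (\<lambda>j. inverse (real (Suc j) ^ 2))"
    using inverse_power_summable[of 2, where 'a=real]
    by (simp add: summable_Suc_iff[symmetric, where f="\<lambda>n. inverse (real n ^ 2)"])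
  then show ?thesis
    by (simp only: inverse_eq_divide)
qed

lemma harm_unbounded: obtains n where "B < (harm n :: real)"
proof -
  have "eventually (\<lambda>n. B + 1 \<le> harm n) sequentially"
    using harm_at_top by (simp add: filterlim_at_top)
  then obtain N where "\<And>n. N \<le> n \<Longrightarrow> B + 1 \<le> harm n"
    by (auto simp: eventually_sequentially)
  then have "B + 1 \<le> harm N"
    by blast
  then show thesis
    using that[of N] by linarith
qed

lemma harmonic_recurrence_unbounded:
  fixes c :: "nat \<Rightarrow> complex"
  assumes l: "cmod l = 1" and rec: "\<And>m. c (Suc m) - l * c m = l ^ Suc m / of_nat (Suc m)"
    and bound: "\<And>m. cmod (c m) \<le> M"
  shows False
proof -
  have l_cnj: "l * cnj l = 1"
    using l by (simp add: complex_norm_square[symmetric])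
  define e where "e m = c m * cnj l ^ m" for m
  have e_Suc: "e (Suc m) = e m + of_real (inverse (of_nat (Suc m)))" for m
  proof -
    have "c (Suc m) = l * c m + l ^ Suc m / of_nat (Suc m)"
      using rec[of m] by (simp add: algebra_simps)
    then have "e (Suc m) = (l * cnj l) * (c m * cnj l ^ m) + (l * cnj l) ^ Suc m / of_nat (Suc m)"
      by (simp add: e_def algebra_simps power_mult_distrib)
    then show ?thesis
      using l_cnj by (simp add: e_def divide_inverse of_real_inverse)
  qed
  have e_harm: "e m = e 0 + of_real (harm m)" for m
    by (induction m) (simp_all add: harm_def e_Suc harm_Suc)
  have e_bound: "cmod (e m) \<le> M" for m
    using bound[of m] l by (simp add: e_def norm_mult norm_power)
  have harm_bound: "harm m \<le> 2 * M" for m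
  proof -
    have "Re (e m) = Re (e 0) + harm m"
      using e_harm[of m] by simp
    moreover have "Re (e m) \<le> M"
      using e_bound[of m] complex_Re_le_cmod order_trans by blast
    moreover have "- M \<le> Re (e 0)"
      using e_bound[of 0] abs_Re_le_cmod[of "e 0"] by linarith
    ultimately show ?thesis
      by linarith
  qed
  obtain n where "2 * M < harm n"
    by (rule harm_unbounded)
  with harm_bound[of n] show False
    by simp
qed

lemma power_series_bounded_coeffs:
  fixes z :: complex and u :: "nat \<Rightarrow> complex"
  assumes z: "cmod z < 1" and u: "\<And>k. cmod (u k) \<le> M"
  shows "summable (\<lambda>k. z ^ k * u k)" and "cmod (\<Sum>k. z ^ k * u k) \<le> M / (1 - cmod z)"
proof -
  have geometric: "summable (\<lambda>k. M * cmod z ^ k)"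
    using z by (intro summable_mult summable_geometric) simp
  have term_bound: "norm (z ^ k * u k) \<le> M * cmod z ^ k" for k
  proof -
    have "cmod z ^ k * cmod (u k) \<le> cmod z ^ k * M"
      by (rule mult_left_mono[OF u]) simp
    then show ?thesis
      by (simp add: norm_mult norm_power mult.commute)
  qed
  then have abs_conv: "summable (\<lambda>k. norm (z ^ k * u k))"
    by (intro summable_comparison_test'[OF geometric, of 0]) auto
  then show "summable (\<lambda>k. z ^ k * u k)"
    by (rule summable_norm_cancel)
  have "cmod (\<Sum>k. z ^ k * u k) \<le> (\<Sum>k. norm (z ^ k * u k))"
    by (rule summable_norm[OF abs_conv])
  also have "\<dots> \<le> (\<Sum>k. M * cmod z ^ k)"
    by (rule suminf_le[OF term_bound abs_conv geometric])
  also have "\<dots> = M / (1 - cmod z)"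
    using z by (simp add: suminf_mult suminf_geometric summable_geometric)
  finally show "cmod (\<Sum>k. z ^ k * u k) \<le> M / (1 - cmod z)" .
qed

lemma Cauchy_Schwarz_suminf_weighted:
  fixes c w :: "nat \<Rightarrow> real"
  assumes c0: "\<And>j. 0 \<le> c j" and c: "summable c"
    and cw: "summable (\<lambda>j. c j * w j)" and cw2: "summable (\<lambda>j. c j * (w j)\<^sup>2)"
  shows "(\<Sum>j. c j * w j)\<^sup>2 \<le> (\<Sum>j. c j) * (\<Sum>j. c j * (w j)\<^sup>2)"
proof (rule LIMSEQ_le_const2)
  show "(\<lambda>n. (\<Sum>j<n. c j * w j)\<^sup>2) \<longlonglongrightarrow> (\<Sum>j. c j * w j)\<^sup>2"
    by (intro tendsto_power summable_LIMSEQ cw)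
  show "\<exists>N. \<forall>n\<ge>N. (\<Sum>j<n. c j * w j)\<^sup>2 \<le> (\<Sum>j. c j) * (\<Sum>j. c j * (w j)\<^sup>2)"
  proof (intro exI allI impI)
    fix n :: nat
    have "(\<Sum>j<n. c j * w j)\<^sup>2 = (\<Sum>j<n. sqrt (c j) * (sqrt (c j) * w j))\<^sup>2"
      by (simp add: c0 mult.assoc[symmetric])
    also have "\<dots> \<le> (\<Sum>j<n. (sqrt (c j))\<^sup>2) * (\<Sum>j<n. (sqrt (c j) * w j)\<^sup>2)"
      by (rule Cauchy_Schwarz_ineq_sum)
    also have "\<dots> = (\<Sum>j<n. c j) * (\<Sum>j<n. c j * (w j)\<^sup>2)"
      by (simp add: c0 power_mult_distrib)
    also have "\<dots> \<le> (\<Sum>j. c j) * (\<Sum>j. c j * (w j)\<^sup>2)"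
      by (intro mult_mono sum_le_suminf c cw2 sum_nonneg suminf_nonneg) (auto simp: c0)
    finally show "(\<Sum>j<n. c j * w j)\<^sup>2 \<le> (\<Sum>j. c j) * (\<Sum>j. c j * (w j)\<^sup>2)" .
  qed
qed

section \<open>Square-summable functions and partial composition operators\<close>

definition square_summable :: "('i \<Rightarrow> complex) \<Rightarrow> bool" where
  "square_summable x \<longleftrightarrow> (\<lambda>i. (cmod (x i))\<^sup>2) summable_on UNIV"

lemma square_summable_iff_bounded_sums:
  "square_summable x \<longleftrightarrow> (\<exists>B. \<forall>F. finite F \<longrightarrow> (\<Sum>i\<in>F. (cmod (x i))\<^sup>2) \<le> B)"
proof
  assume "square_summable x"
  then show "\<exists>B. \<forall>F. finite F \<longrightarrow> (\<Sum>i\<in>F. (cmod (x i))\<^sup>2) \<le> B"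
    unfolding square_summable_def by (auto intro!: exI finite_sum_le_infsum)
next
  assume "\<exists>B. \<forall>F. finite F \<longrightarrow> (\<Sum>i\<in>F. (cmod (x i))\<^sup>2) \<le> B"
  then obtain B where "\<And>F. finite F \<Longrightarrow> (\<Sum>i\<in>F. (cmod (x i))\<^sup>2) \<le> B" by blast
  then show "square_summable x"
    unfolding square_summable_def
    by (intro nonneg_bdd_above_summable_on) (auto intro!: bdd_aboveI[where M=B])
qed

lemma square_summable_bounded:
  assumes "square_summable x"
  shows "\<exists>M. \<forall>i. cmod (x i) \<le> M"
proof -
  obtain B where B: "\<And>F. finite F \<Longrightarrow> (\<Sum>i\<in>F. (cmod (x i))\<^sup>2) \<le> B"
    using assms by (auto simp: square_summable_iff_bounded_sums)
  have "cmod (x i) \<le> sqrt B" for i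
    using B[of "{i}"] by (simp add: real_le_rsqrt)
  then show ?thesis by blast
qed

lemma square_summable_comparison:
  assumes "square_summable y" and "\<And>i. cmod (x i) \<le> cmod (y i)"
  shows "square_summable x"
  using assms unfolding square_summable_def
  by (auto intro: summable_on_comparison_test power_mono)

lemma square_summable_lincomb:
  assumes x: "square_summable x" and y: "square_summable y"
  shows "square_summable (\<lambda>i. c * x i + d * y i)"
proof -
  have bound: "(cmod (c * x i + d * y i))\<^sup>2 \<le> 2 * (cmod c)\<^sup>2 * (cmod (x i))\<^sup>2 + 2 * (cmod d)\<^sup>2 * (cmod (y i))\<^sup>2"
    for i
  proof -
    have "cmod (c * x i + d * y i) \<le> cmod c * cmod (x i) + cmod d * cmod (y i)"
      by (metis norm_mult norm_triangle_ineq)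
    then have "(cmod (c * x i + d * y i))\<^sup>2 \<le> (cmod c * cmod (x i) + cmod d * cmod (y i))\<^sup>2"
      by (simp add: power_mono)
    also have "\<dots> \<le> 2 * (cmod c * cmod (x i))\<^sup>2 + 2 * (cmod d * cmod (y i))\<^sup>2"
      using zero_le_power2[of "cmod c * cmod (x i) - cmod d * cmod (y i)"]
      by (simp only: power2_diff power2_sum)
    finally show ?thesis by (simp add: power_mult_distrib)
  qed
  have dominant: "(\<lambda>i. 2 * (cmod c)\<^sup>2 * (cmod (x i))\<^sup>2 + 2 * (cmod d)\<^sup>2 * (cmod (y i))\<^sup>2) summable_on UNIV"
    using x y unfolding square_summable_def by (intro summable_on_add summable_on_cmult_right)
  show ?thesis
    unfolding square_summable_def by (rule summable_on_comparison_test[OF dominant]) (use bound in auto)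
qed

lemma square_summable_reindex:
  assumes "bij h"
  shows "square_summable (x \<circ> h) \<longleftrightarrow> square_summable x"
  using summable_on_reindex_bij_betw[OF assms, of "\<lambda>i. (cmod (x i))\<^sup>2"]
  by (simp add: square_summable_def)

lemma square_summable_suminf:
  fixes w :: "nat \<Rightarrow> complex" and Y :: "nat \<Rightarrow> 'i \<Rightarrow> complex"
  assumes w: "summable (\<lambda>j. cmod (w j))"
    and Y: "\<And>j F. finite F \<Longrightarrow> (\<Sum>i\<in>F. (cmod (Y j i))\<^sup>2) \<le> B"
  shows "summable (\<lambda>j. w j * Y j i)" and "square_summable (\<lambda>i. \<Sum>j. w j * Y j i)"
proof -
  have Y_sq: "(cmod (Y j i))\<^sup>2 \<le> B" for j i
    using Y[of "{i}" j] by simp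
  then have Y_le: "cmod (Y j i) \<le> sqrt B" for j i
    by (simp add: real_le_rsqrt)
  have abs_conv: "summable (\<lambda>j. cmod (w j) * cmod (Y j i))" for i
    by (rule summable_comparison_test'[OF summable_mult2[OF w, of "sqrt B"], of 0])
      (simp add: mult_left_mono Y_le)
  have sq_conv: "summable (\<lambda>j. cmod (w j) * (cmod (Y j i))\<^sup>2)" for i
    by (rule summable_comparison_test'[OF summable_mult2[OF w, of B], of 0])
      (simp add: mult_left_mono Y_sq)
  show conv: "summable (\<lambda>j. w j * Y j i)" for i
    by (rule summable_norm_cancel) (simp add: norm_mult abs_conv)
  define R where "R = (\<Sum>j. cmod (w j))"
  have R0: "0 \<le> R"
    unfolding R_def by (intro suminf_nonneg w) simp
  have pointwise: "(cmod (\<Sum>j. w j * Y j i))\<^sup>2 \<le> R * (\<Sum>j. cmod (w j) * (cmod (Y j i))\<^sup>2)" for i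
  proof -
    have "cmod (\<Sum>j. w j * Y j i) \<le> (\<Sum>j. cmod (w j) * cmod (Y j i))"
      using summable_norm[of "\<lambda>j. w j * Y j i"] abs_conv by (simp add: norm_mult)
    then have "(cmod (\<Sum>j. w j * Y j i))\<^sup>2 \<le> (\<Sum>j. cmod (w j) * cmod (Y j i))\<^sup>2"
      by (simp add: power_mono)
    also have "\<dots> \<le> R * (\<Sum>j. cmod (w j) * (cmod (Y j i))\<^sup>2)"
      unfolding R_def by (rule Cauchy_Schwarz_suminf_weighted) (use w abs_conv sq_conv in auto)
    finally show ?thesis .
  qed
  show "square_summable (\<lambda>i. \<Sum>j. w j * Y j i)"
    unfolding square_summable_iff_bounded_sums
  proof (intro exI allI impI)
    fix F :: "'i set"
    assume F: "finite F"
    have "(\<Sum>i\<in>F. (cmod (\<Sum>j. w j * Y j i))\<^sup>2) \<le> (\<Sum>i\<in>F. R * (\<Sum>j. cmod (w j) * (cmod (Y j i))\<^sup>2))"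
      by (intro sum_mono pointwise)
    also have "\<dots> = R * (\<Sum>j. cmod (w j) * (\<Sum>i\<in>F. (cmod (Y j i))\<^sup>2))"
      by (simp add: sum_distrib_left suminf_sum[OF sq_conv])
    also have "\<dots> \<le> R * (\<Sum>j. cmod (w j) * B)"
    proof (intro mult_left_mono R0 suminf_le summable_mult2 w mult_left_mono Y F)
      have "summable (\<lambda>j. \<Sum>i\<in>F. cmod (w j) * (cmod (Y j i))\<^sup>2)"
        by (intro summable_sum sq_conv)
      then show "summable (\<lambda>j. cmod (w j) * (\<Sum>i\<in>F. (cmod (Y j i))\<^sup>2))"
        by (simp add: sum_distrib_left)
    qed simp
    finally show "(\<Sum>i\<in>F. (cmod (\<Sum>j. w j * Y j i))\<^sup>2) \<le> R * (\<Sum>j. cmod (w j) * B)" .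
  qed
qed

definition partial_comp :: "('i \<Rightarrow> 'i option) \<Rightarrow> ('i \<Rightarrow> complex) \<Rightarrow> 'i \<Rightarrow> complex" where
  "partial_comp p x i = (case p i of None \<Rightarrow> 0 | Some j \<Rightarrow> x j)"

lemma partial_comp_sum_le:
  assumes p: "inj_on p (dom p)" and F: "finite F"
    and x: "\<And>G. finite G \<Longrightarrow> (\<Sum>j\<in>G. (cmod (x j))\<^sup>2) \<le> B"
  shows "(\<Sum>i\<in>F. (cmod (partial_comp p x i))\<^sup>2) \<le> B"
proof -
  let ?D = "F \<inter> dom p"
  have "(\<Sum>i\<in>F. (cmod (partial_comp p x i))\<^sup>2) = (\<Sum>i\<in>?D. (cmod (x (the (p i))))\<^sup>2)"
    by (rule sum.mono_neutral_cong_right) (auto simp: F partial_comp_def split: option.splits)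
  also have "\<dots> = (\<Sum>j\<in>(\<lambda>i. the (p i)) ` ?D. (cmod (x j))\<^sup>2)"
  proof (rule sum.reindex[symmetric, unfolded comp_def])
    show "inj_on (\<lambda>i. the (p i)) ?D"
      using p unfolding inj_on_def by (metis IntD2 domD option.sel)
  qed
  also have "\<dots> \<le> B"
    using F by (intro x) auto
  finally show ?thesis .
qed

lemma square_summable_partial_comp:
  "inj_on p (dom p) \<Longrightarrow> square_summable x \<Longrightarrow> square_summable (partial_comp p x)"
  unfolding square_summable_iff_bounded_sums by (metis partial_comp_sum_le)

lemma partial_comp_diff:
  "partial_comp p (\<lambda>i. x i - y i) i = partial_comp p x i - partial_comp p y i"
  by (simp add: partial_comp_def split: option.splits)

lemma partial_comp_eigenvector_zero:
  assumes l: "1 < cmod l" and M: "\<And>i. cmod (x i) \<le> M"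
    and eigen: "\<And>i. partial_comp p x i = l * x i"
  shows "x i = 0"
proof -
  define S where "S = (SUP i. cmod (x i))"
  have le_S: "cmod (x i) \<le> S" for i
    unfolding S_def using M by (intro cSUP_upper bdd_aboveI) auto
  then have S0: "0 \<le> S"
    using norm_ge_zero order_trans by blast
  have l0: "0 < cmod l"
    using l by linarith
  have "cmod (x i) \<le> S / cmod l" for i
  proof -
    have "cmod l * cmod (x i) = cmod (partial_comp p x i)"
      using eigen[of i] by (simp add: norm_mult)
    also have "\<dots> \<le> S"
      using le_S S0 by (simp add: partial_comp_def split: option.splits)
    finally show ?thesis
      using l0 by (simp add: pos_le_divide_eq mult.commute)
  qed
  then have "S \<le> S / cmod l"
    unfolding S_def by (intro cSUP_least) auto
  then have "S * (cmod l - 1) \<le> 0"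
    using l0 by (simp add: pos_le_divide_eq algebra_simps)
  then have "S \<le> 0"
    using l by (simp add: mult_le_0_iff)
  then show ?thesis
    using le_S[of i] by (metis norm_le_zero_iff order_trans)
qed

lemma partial_comp_minus_scalar_surj:
  assumes p: "inj_on p (dom p)" and l: "1 < cmod l" and y: "square_summable y"
  obtains x where "square_summable x" and "\<And>i. partial_comp p x i - l * x i = y i"
proof -
  obtain B where B: "\<And>F. finite F \<Longrightarrow> (\<Sum>i\<in>F. (cmod (y i))\<^sup>2) \<le> B"
    using y by (auto simp: square_summable_iff_bounded_sums)
  define Y where "Y j = (partial_comp p ^^ j) y" for j
  have Y_sums: "(\<Sum>i\<in>F. (cmod (Y j i))\<^sup>2) \<le> B" if "finite F" for j F
    using that
  proof (induction j arbitrary: F)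
    case 0
    then show ?case by (simp add: Y_def B)
  next
    case (Suc j)
    then show ?case
      using partial_comp_sum_le[OF p Suc.prems Suc.IH] by (simp add: Y_def)
  qed
  define w where "w j = inverse l ^ Suc j" for j
  have "summable (\<lambda>j. inverse (cmod l) * inverse (cmod l) ^ j)"
    using l by (intro summable_mult summable_geometric) (simp add: inverse_less_1_iff)
  then have w: "summable (\<lambda>j. cmod (w j))"
    by (simp add: w_def norm_mult norm_power norm_inverse)
  note conv = square_summable_suminf[where Y = Y and B = B, OF w Y_sums]
  define x where "x = (\<lambda>i. - (\<Sum>j. w j * Y j i))"
  have "square_summable x"
  proof (rule square_summable_comparison[OF conv(2)])
    fix i
    show "cmod (x i) \<le> cmod (\<Sum>j. w j * Y j i)"
      unfolding x_def norm_minus_cancel ..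
  qed
  moreover have "partial_comp p x i - l * x i = y i" for i
  proof -
    define v where "v j = inverse l ^ j * Y j i" for j
    have l0: "l \<noteq> 0"
      using l by auto
    have comp: "partial_comp p x i = - (\<Sum>j. v (Suc j))"
      by (cases "p i") (simp_all add: partial_comp_def x_def v_def w_def Y_def)
    have lv: "(\<lambda>j. l * (w j * Y j i)) = v"
      using l0 by (auto simp: v_def w_def fun_eq_iff)
    have "l * x i = - (l * (\<Sum>j. w j * Y j i))"
      by (simp add: x_def)
    also have "l * (\<Sum>j. w j * Y j i) = (\<Sum>j. l * (w j * Y j i))"
      by (rule suminf_mult[OF conv(1), symmetric])
    finally have scaled: "l * x i = - (\<Sum>j. v j)"
      by (simp only: lv)
    have "summable (\<lambda>j. l * (w j * Y j i))"
      by (rule summable_mult[OF conv(1)])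
    then have "summable v"
      by (simp only: lv)
    then have "(\<Sum>j. v j) = v 0 + (\<Sum>j. v (Suc j))"
      by (simp add: suminf_split_head)
    then show ?thesis
      using comp scaled by (simp add: v_def Y_def)
  qed
  ultimately show thesis
    by (rule that)
qed

lemma bij_betw_partial_comp_minus_scalar:
  assumes p: "inj_on p (dom p)" and l: "1 < cmod l"
  shows "bij_betw (\<lambda>x i. partial_comp p x i - l * x i) {x. square_summable x} {x. square_summable x}"
    (is "bij_betw ?T ?S ?S")
proof -
  have "inj_on ?T ?S"
  proof (rule inj_onI)
    fix x x'
    assume "x \<in> ?S" "x' \<in> ?S" and eq: "?T x = ?T x'"
    define d where "d = (\<lambda>i. x i - x' i)"
    have "square_summable d"
      using square_summable_lincomb[of x x' 1 "-1"] \<open>x \<in> ?S\<close> \<open>x' \<in> ?S\<close> by (simp add: d_def)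
    then obtain M where "\<And>i. cmod (d i) \<le> M"
      using square_summable_bounded by blast
    moreover have "partial_comp p d i = l * d i" for i
      using fun_cong[OF eq, of i] unfolding d_def partial_comp_diff by algebra
    ultimately have "d i = 0" for i
      by (rule partial_comp_eigenvector_zero[OF l])
    then show "x = x'"
      by (auto simp: d_def fun_eq_iff)
  qed
  moreover have "?T ` ?S = ?S"
  proof (intro equalityI subsetI)
    fix z
    assume "z \<in> ?T ` ?S"
    then obtain x where "square_summable x" "z = ?T x"
      by auto
    then show "z \<in> ?S"
      using square_summable_lincomb[OF square_summable_partial_comp[OF p], of x x 1 "-l"] by simp
  next
    fix y
    assume "y \<in> ?S"
    then obtain x where "square_summable x" "\<And>i. partial_comp p x i - l * x i = y i"
      using partial_comp_minus_scalar_surj[OF p l] by auto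
    then show "y \<in> ?T ` ?S"
      by (intro image_eqI[of _ _ x]) auto
  qed
  ultimately show ?thesis
    by (simp add: bij_betw_def)
qed

section \<open>The space \<open>H2D_l2Z\<close>\<close>

lemma square_summable_case_prod_iff:
  "square_summable (case_prod a) \<longleftrightarrow> (\<lambda>(k, n). (cmod (a k n))\<^sup>2) summable_on Sigma UNIV (\<lambda>_. UNIV)"
proof -
  have "(\<lambda>i. (cmod (case_prod a i))\<^sup>2) = (\<lambda>(k, n). (cmod (a k n))\<^sup>2)" by auto
  then show ?thesis by (simp add: square_summable_def)
qed

lemma H2D_l2Z_iff: "a \<in> H2D_l2Z \<longleftrightarrow> square_summable (case_prod a)"
  unfolding square_summable_case_prod_iff
proof
  assume "a \<in> H2D_l2Z"
  then have rows: "\<And>k. ((\<lambda>n. (cmod (a k n))\<^sup>2) has_sum (l2Z_norm (a k))\<^sup>2) UNIV"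
    and norms: "(\<lambda>k. (l2Z_norm (a k))\<^sup>2) summable_on UNIV"
    by (auto simp: H2D_l2Z_def l2Z_def l2Z_norm_def infsum_nonneg)
  show "(\<lambda>(k, n). (cmod (a k n))\<^sup>2) summable_on Sigma UNIV (\<lambda>_. UNIV)"
    by (rule summable_on_SigmaI[OF _ norms]) (use rows in auto)
next
  assume sq: "(\<lambda>(k, n). (cmod (a k n))\<^sup>2) summable_on Sigma UNIV (\<lambda>_. UNIV)"
  have rows: "(\<lambda>n. (cmod (a k n))\<^sup>2) summable_on UNIV" for k
    using summable_on_SigmaD1[OF sq] by auto
  have "(\<lambda>k. \<Sum>\<^sub>\<infinity>n. (cmod (a k n))\<^sup>2) summable_on UNIV"
    using summable_on_SigmaD[OF sq[unfolded case_prod_beta]] rows by auto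
  then show "a \<in> H2D_l2Z"
    using rows by (simp add: H2D_l2Z_def l2Z_def l2Z_norm_def infsum_nonneg)
qed

lemma H2D_norm_eq:
  assumes "a \<in> H2D_l2Z"
  shows "H2D_norm a = sqrt (\<Sum>\<^sub>\<infinity>i. (cmod (case_prod a i))\<^sup>2)"
proof -
  have "(\<lambda>i. (cmod (case_prod a i))\<^sup>2) summable_on Sigma UNIV (\<lambda>_. UNIV)"
    using assms by (simp add: H2D_l2Z_iff square_summable_def)
  then have "(\<Sum>\<^sub>\<infinity>i. (cmod (case_prod a i))\<^sup>2) = (\<Sum>\<^sub>\<infinity>k. \<Sum>\<^sub>\<infinity>n. (cmod (case_prod a (k, n)))\<^sup>2)"
    by (subst infsum_Sigma_banach) auto
  then show ?thesis
    by (simp add: H2D_norm_def l2Z_norm_def infsum_nonneg)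
qed

lemma H2D_l2Z_lincomb:
  "a \<in> H2D_l2Z \<Longrightarrow> b \<in> H2D_l2Z \<Longrightarrow> (\<lambda>k n. c * a k n + d * b k n) \<in> H2D_l2Z"
  using square_summable_lincomb[of "case_prod a" "case_prod b" c d]
  by (simp add: H2D_l2Z_iff case_prod_beta')

lemma H2D_l2Z_diff: "a \<in> H2D_l2Z \<Longrightarrow> b \<in> H2D_l2Z \<Longrightarrow> a - b \<in> H2D_l2Z"
  using H2D_l2Z_lincomb[of a b 1 "-1"] by (simp add: fun_diff_def)

lemma H2D_l2Z_zero: "0 \<in> H2D_l2Z"
  by (simp add: H2D_l2Z_iff square_summable_def zero_fun_def)

lemma H2D_l2Z_comparison:
  "x \<in> H2D_l2Z \<Longrightarrow> (\<And>k n. cmod (y k n) \<le> cmod (x k n)) \<Longrightarrow> y \<in> H2D_l2Z"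
  unfolding H2D_l2Z_iff by (erule square_summable_comparison) auto

lemma row_bounded_in_H2D_l2Z:
  assumes bound: "\<And>k n. cmod (x k n) \<le> c k" and support: "\<And>k n. x k n \<noteq> 0 \<Longrightarrow> n \<in> R k"
    and fin: "\<And>k. finite (R k)" and summ: "summable (\<lambda>k. real (card (R k)) * (c k)\<^sup>2)"
  shows "x \<in> H2D_l2Z"
proof -
  have row: "((\<lambda>n. (cmod (x k n))\<^sup>2) has_sum (\<Sum>n\<in>R k. (cmod (x k n))\<^sup>2)) UNIV" for k
    by (rule has_sum_finite_neutralI) (use fin support in auto)
  then have row_l2: "x k \<in> l2Z" for k
    by (auto simp: l2Z_def summable_on_def)
  have norm: "(l2Z_norm (x k))\<^sup>2 = (\<Sum>n\<in>R k. (cmod (x k n))\<^sup>2)" for k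
    using row[of k] by (simp add: l2Z_norm_def infsumI sum_nonneg)
  have row_bound: "(\<Sum>n\<in>R k. (cmod (x k n))\<^sup>2) \<le> real (card (R k)) * (c k)\<^sup>2" for k
    using sum_bounded_above[of "R k" "\<lambda>n. (cmod (x k n))\<^sup>2" "(c k)\<^sup>2"] bound
    by (simp add: power_mono)
  have "(\<lambda>k. real (card (R k)) * (c k)\<^sup>2) summable_on UNIV"
    using summ by (simp add: summable_on_UNIV_nonneg_real_iff)
  then have "(\<lambda>k. (l2Z_norm (x k))\<^sup>2) summable_on UNIV"
    by (rule summable_on_comparison_test) (simp_all add: norm row_bound sum_nonneg)
  then show ?thesis
    using row_l2 by (simp add: H2D_l2Z_def)
qed

definition first_row :: "(nat \<Rightarrow> complex) \<Rightarrow> nat \<Rightarrow> int \<Rightarrow> complex" where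
  "first_row u k n = (if k = 0 \<and> 0 \<le> n then u (nat n) else 0)"

lemma first_row_in_H2D_l2Z:
  assumes "summable (\<lambda>j. (cmod (u j))\<^sup>2)"
  shows "first_row u \<in> H2D_l2Z"
proof -
  let ?e = "\<lambda>j. (0 :: nat, int j)"
  let ?f = "\<lambda>i. (cmod (case_prod (first_row u) i))\<^sup>2"
  have "?f \<circ> ?e = (\<lambda>j. (cmod (u j))\<^sup>2)"
    by (simp add: fun_eq_iff first_row_def)
  moreover have "inj ?e"
    by (simp add: inj_def)
  ultimately have "?f summable_on range ?e"
    using assms by (simp add: summable_on_reindex summable_on_UNIV_nonneg_real_iff)
  moreover have "?f (k, n) = 0" if "(k, n) \<notin> range ?e" for k n
  proof -
    have "\<not> (k = 0 \<and> 0 \<le> n)"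
      using that by (metis nat_0_le rangeI)
    then show ?thesis
      by (auto simp: first_row_def)
  qed
  ultimately have "?f summable_on UNIV"
    using summable_on_cong_neutral[of UNIV "range ?e" ?f ?f] by force
  then show ?thesis
    by (simp add: H2D_l2Z_iff square_summable_def)
qed

lemma geometric_row_in_H2D_l2Z:
  assumes "cmod l < 1"
  shows "first_row (\<lambda>j. l ^ j) \<in> H2D_l2Z"
proof (rule first_row_in_H2D_l2Z)
  have "summable (\<lambda>j. ((cmod l)\<^sup>2) ^ j)"
    using assms by (intro summable_geometric) (simp add: abs_square_less_1)
  then show "summable (\<lambda>j. (cmod (l ^ j))\<^sup>2)"
    by (simp add: norm_power power_mult[symmetric] mult.commute)
qed

section \<open>The operators \<open>M_psi1\<close> and \<open>M_psi2\<close>\<close>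

lemma M_psi1_apply:
  "M_psi1 a k n = (if -1 \<le> n then a k (n + 1) else if k = 0 then 0 else a (k - 1) (n + 1))"
  by (simp add: M_psi1_def mult_affine_def omega_adj_def p_perp_def p_minus_def)

lemma M_psi2_apply:
  "M_psi2 a k n = (if n < 0 then a k (n - 1) else if k = 0 then 0 else a (k - 1) (n - 1))"
  by (simp add: M_psi2_def mult_affine_def omega_def p_perp_def p_minus_def)

definition psi1_index :: "nat \<times> int \<Rightarrow> (nat \<times> int) option" where
  "psi1_index = (\<lambda>(k, n).
     if -1 \<le> n then Some (k, n + 1) else if k = 0 then None else Some (k - 1, n + 1))"

lemma inj_psi1_index: "inj_on psi1_index (dom psi1_index)"
  by (auto simp: inj_on_def psi1_index_def split: if_splits)

lemma case_prod_M_psi1: "case_prod (M_psi1 a) = partial_comp psi1_index (case_prod a)"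
  by (auto simp: fun_eq_iff partial_comp_def psi1_index_def M_psi1_apply)

definition reflect :: "(nat \<Rightarrow> int \<Rightarrow> complex) \<Rightarrow> nat \<Rightarrow> int \<Rightarrow> complex" where
  "reflect a k n = a k (- n - 2)"

lemma reflect_reflect [simp]: "reflect (reflect a) = a"
  by (simp add: reflect_def[abs_def])

lemma bij_reflect: "bij reflect"
  by (rule o_bij[of reflect]) (simp_all add: fun_eq_iff)

lemma reflect_diff: "reflect (a - b) = reflect a - reflect b"
  by (simp add: reflect_def fun_eq_iff)

lemma M_psi1_reflect: "M_psi1 (reflect a) = reflect (M_psi2 a)"
  by (auto simp: fun_eq_iff reflect_def M_psi1_apply M_psi2_apply)

lemma M_psi2_reflect: "M_psi2 (reflect a) = reflect (M_psi1 a)"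
  by (metis M_psi1_reflect reflect_reflect)

lemma reflect_in_H2D_l2Z_iff: "reflect a \<in> H2D_l2Z \<longleftrightarrow> a \<in> H2D_l2Z"
proof -
  have "bij (\<lambda>(k :: nat, n :: int). (k, - n - 2))"
    by (rule o_bij[where f="\<lambda>(k, n). (k, - n - 2)" and g="\<lambda>(k, n). (k, - n - 2)"])
      (simp_all add: fun_eq_iff split_def)
  moreover have "case_prod (reflect a) = case_prod a \<circ> (\<lambda>(k, n). (k, - n - 2))"
    by (simp add: fun_eq_iff split_def reflect_def)
  ultimately show ?thesis
    by (simp add: H2D_l2Z_iff square_summable_reindex)
qed

lemma reflect_image_H2D_l2Z: "reflect ` H2D_l2Z = H2D_l2Z"
proof (intro equalityI subsetI)
  fix b
  assume "b \<in> reflect ` H2D_l2Z"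
  then show "b \<in> H2D_l2Z"
    using reflect_in_H2D_l2Z_iff by auto
next
  fix a
  assume "a \<in> H2D_l2Z"
  then show "a \<in> reflect ` H2D_l2Z"
    by (intro image_eqI[of _ _ "reflect a"]) (simp_all add: reflect_in_H2D_l2Z_iff)
qed

lemma M_psi1_in_H2D_l2Z: "a \<in> H2D_l2Z \<Longrightarrow> M_psi1 a \<in> H2D_l2Z"
  by (simp add: H2D_l2Z_iff case_prod_M_psi1 square_summable_partial_comp inj_psi1_index)

lemma M_psi2_in_H2D_l2Z: "a \<in> H2D_l2Z \<Longrightarrow> M_psi2 a \<in> H2D_l2Z"
  using M_psi1_in_H2D_l2Z[of "reflect a"] by (simp add: M_psi1_reflect reflect_in_H2D_l2Z_iff)

lemma op_minus_scalar_in_H2D_l2Z: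
  "a \<in> H2D_l2Z \<Longrightarrow> T a \<in> H2D_l2Z \<Longrightarrow> op_minus_scalar T l a \<in> H2D_l2Z"
  using H2D_l2Z_lincomb[of "T a" a 1 "- l"] by (simp add: op_minus_scalar_def)

lemma op_minus_scalar_diff:
  assumes "\<And>a b. T (a - b) = T a - T b"
  shows "op_minus_scalar T l (a - b) = op_minus_scalar T l a - op_minus_scalar T l b"
proof -
  have "T (a - b) k n = T a k n - T b k n" for k n
    by (simp add: assms)
  then show ?thesis
    by (simp add: op_minus_scalar_def fun_eq_iff algebra_simps)
qed

lemma M_psi1_diff: "M_psi1 (a - b) = M_psi1 a - M_psi1 b"
  by (simp add: fun_eq_iff M_psi1_apply)

lemma M_psi2_diff: "M_psi2 (a - b) = M_psi2 a - M_psi2 b"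
  by (simp add: fun_eq_iff M_psi2_apply)

lemma op_minus_scalar_M_psi_commute:
  "op_minus_scalar M_psi1 l1 (op_minus_scalar M_psi2 l2 a) =
    op_minus_scalar M_psi2 l2 (op_minus_scalar M_psi1 l1 a)"
  by (auto simp: fun_eq_iff op_minus_scalar_def M_psi1_apply M_psi2_apply algebra_simps)

lemma op_minus_scalar_M_psi1_reflect:
  "op_minus_scalar M_psi1 l (reflect a) = reflect (op_minus_scalar M_psi2 l a)"
  by (simp add: op_minus_scalar_def M_psi1_reflect fun_eq_iff) (simp add: reflect_def)

lemma op_minus_scalar_M_psi2_reflect:
  "op_minus_scalar M_psi2 l (reflect a) = reflect (op_minus_scalar M_psi1 l a)"
  by (simp add: op_minus_scalar_def M_psi2_reflect fun_eq_iff) (simp add: reflect_def)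

lemma bij_betw_op_minus_scalar_M_psi1:
  assumes "1 < cmod l"
  shows "bij_betw (op_minus_scalar M_psi1 l) H2D_l2Z H2D_l2Z"
proof -
  let ?T = "\<lambda>x i. partial_comp psi1_index x i - l * x i"
  have uncurry: "bij_betw case_prod H2D_l2Z {x. square_summable x}"
    by (rule bij_betw_byWitness[where f' = curry]) (auto simp: H2D_l2Z_iff)
  have curry: "bij_betw curry {x. square_summable x} H2D_l2Z"
    by (rule bij_betw_byWitness[where f' = case_prod]) (auto simp: H2D_l2Z_iff)
  have "op_minus_scalar M_psi1 l = curry \<circ> (?T \<circ> case_prod)"
    by (simp add: fun_eq_iff op_minus_scalar_def flip: case_prod_M_psi1)
  then show ?thesis
    using bij_betw_trans[OF bij_betw_trans[OF uncurry bij_betw_partial_comp_minus_scalar] curry]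
      inj_psi1_index assms by simp
qed

section \<open>Koszul complexes\<close>

lemma koszul_not_breaks_if_bij:
  fixes A B :: "'v::ab_group_add \<Rightarrow> 'v"
  assumes zero: "0 \<in> H" and diff: "\<And>x y. x \<in> H \<Longrightarrow> y \<in> H \<Longrightarrow> x - y \<in> H"
    and B_H: "\<And>x. x \<in> H \<Longrightarrow> B x \<in> H"
    and A_diff: "\<And>x y. A (x - y) = A x - A y" and B_diff: "\<And>x y. B (x - y) = B x - B y"
    and comm: "\<And>x. A (B x) = B (A x)"
    and A: "bij_betw A H H"
  shows "\<not> koszul_breaks_at H A B n"
proof -
  have A0: "A 0 = 0" and B0: "B 0 = 0"
    using A_diff[of 0 0] B_diff[of 0 0] by simp_all
  have inj: "x = 0" if "x \<in> H" "A x = 0" for x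
    using A zero that A0 by (metis bij_betw_imp_inj_on inj_onD)
  have surj: "\<exists>x\<in>H. A x = y" if "y \<in> H" for y
    using A that by (metis bij_betw_imp_surj_on imageE)
  have A_H: "A x \<in> H" if "x \<in> H" for x
    using A that by (metis bij_betw_imp_surj_on imageI)
  have stage1: "{0} = {h\<in>H. A h = 0 \<and> B h = 0}"
    using zero A0 B0 inj by auto
  have stage2: "(\<lambda>h. (A h, B h)) ` H = {(h1, h2). h1 \<in> H \<and> h2 \<in> H \<and> A h2 - B h1 = 0}"
  proof (intro equalityI subsetI)
    fix z
    assume "z \<in> (\<lambda>h. (A h, B h)) ` H"
    then show "z \<in> {(h1, h2). h1 \<in> H \<and> h2 \<in> H \<and> A h2 - B h1 = 0}"
      using A_H B_H comm by auto
  next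
    fix z
    assume "z \<in> {(h1, h2). h1 \<in> H \<and> h2 \<in> H \<and> A h2 - B h1 = 0}"
    then obtain h1 h2 where z: "z = (h1, h2)" "h1 \<in> H" "h2 \<in> H" "A h2 = B h1"
      by auto
    obtain h where h: "h \<in> H" "A h = h1"
      using surj z(2) by blast
    have "A (B h - h2) = 0"
      using A_diff comm h z by simp
    then have "B h = h2"
      using inj diff B_H h z by fastforce
    then show "z \<in> (\<lambda>h. (A h, B h)) ` H"
      using h z by auto
  qed
  have stage3: "(\<lambda>(h1, h2). A h2 - B h1) ` (H \<times> H) = H"
  proof (intro equalityI subsetI)
    fix z
    assume "z \<in> (\<lambda>(h1, h2). A h2 - B h1) ` (H \<times> H)"
    then show "z \<in> H"
      using A_H B_H diff by auto
  next
    fix z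
    assume "z \<in> H"
    then obtain x where "x \<in> H" "A x = z"
      using surj by blast
    then show "z \<in> (\<lambda>(h1, h2). A h2 - B h1) ` (H \<times> H)"
      using zero B0 by (intro image_eqI[of _ _ "(0, x)"]) auto
  qed
  show ?thesis
    unfolding koszul_breaks_at_def using stage1 stage2 stage3 by auto
qed

lemma koszul_breaks_at_swap:
  fixes A B :: "'v::ab_group_add \<Rightarrow> 'v"
  assumes zero: "0 \<in> H" and diff: "\<And>x y. x \<in> H \<Longrightarrow> y \<in> H \<Longrightarrow> x - y \<in> H"
    and A_diff: "\<And>x y. A (x - y) = A x - A y" and B_diff: "\<And>x y. B (x - y) = B x - B y"
  shows "koszul_breaks_at H B A n \<longleftrightarrow> koszul_breaks_at H A B n"
proof -
  have neg: "- x \<in> H" if "x \<in> H" for x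
    using diff[OF zero that] by simp
  have A_neg: "A (- x) = - A x" and B_neg: "B (- x) = - B x" for x
    using A_diff[of 0 x] A_diff[of 0 0] B_diff[of 0 x] B_diff[of 0 0] by simp_all
  have stage2: "(\<lambda>h. (B h, A h)) ` H = {(h1, h2). h1 \<in> H \<and> h2 \<in> H \<and> B h2 - A h1 = 0}
    \<longleftrightarrow> (\<lambda>h. (A h, B h)) ` H = {(h1, h2). h1 \<in> H \<and> h2 \<in> H \<and> A h2 - B h1 = 0}"
  proof -
    have "(\<lambda>h. (B h, A h)) ` H = prod.swap ` (\<lambda>h. (A h, B h)) ` H"
      by (simp add: image_image)
    moreover have "{(h1, h2). h1 \<in> H \<and> h2 \<in> H \<and> B h2 - A h1 = 0} =
        prod.swap ` {(h1, h2). h1 \<in> H \<and> h2 \<in> H \<and> A h2 - B h1 = 0}"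
      by (auto simp: image_iff)
    ultimately show ?thesis
      by (simp add: inj_image_eq_iff)
  qed
  have range_sub: "(\<lambda>(h1, h2). D h2 - C h1) ` (H \<times> H) \<subseteq> (\<lambda>(h1, h2). C h2 - D h1) ` (H \<times> H)"
    if C_neg: "\<And>x. C (- x) = - C x" and D_neg: "\<And>x. D (- x) = - D x" for C D :: "'v \<Rightarrow> 'v"
  proof
    fix z
    assume "z \<in> (\<lambda>(h1, h2). D h2 - C h1) ` (H \<times> H)"
    then obtain h1 h2 where h: "h1 \<in> H" "h2 \<in> H" and z: "z = D h2 - C h1"
      by auto
    have "z = C (- h1) - D (- h2)"
      by (simp add: z C_neg D_neg)
    then show "z \<in> (\<lambda>(h1, h2). C h2 - D h1) ` (H \<times> H)"
      using neg h by (intro image_eqI[of _ _ "(- h2, - h1)"]) auto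
  qed
  have stage3: "(\<lambda>(h1, h2). B h2 - A h1) ` (H \<times> H) = (\<lambda>(h1, h2). A h2 - B h1) ` (H \<times> H)"
    using range_sub[of A B, OF A_neg B_neg] range_sub[of B A, OF B_neg A_neg] by (rule equalityI)
  have stage1: "{h \<in> H. B h = 0 \<and> A h = 0} = {h \<in> H. A h = 0 \<and> B h = 0}"
    by auto
  show ?thesis
    unfolding koszul_breaks_at_def stage1 stage2 stage3 ..
qed

lemma koszul_breaks_at_conj:
  fixes R A B A' B' :: "'v::ab_group_add \<Rightarrow> 'v"
  assumes R: "bij R" and R_diff: "\<And>x y. R (x - y) = R x - R y" and RH: "R ` H = H"
    and A: "\<And>x. A (R x) = R (A' x)" and B: "\<And>x. B (R x) = R (B' x)"
  shows "koszul_breaks_at H A B n \<longleftrightarrow> koszul_breaks_at H A' B' n"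
proof -
  have inj: "inj R"
    using R by (rule bij_is_inj)
  have R_eq_0: "R x = 0 \<longleftrightarrow> x = 0" for x
    using R_diff[of 0 0] inj by (metis diff_self injD)
  have inj2: "inj (map_prod R R)"
    using map_prod_inj_on[OF inj inj] by simp
  have HH: "map_prod R R ` (H \<times> H) = H \<times> H"
    by (rule map_prod_surj_on[OF RH RH])
  have R_zero: "R ` {0} = {0}"
    using R_eq_0 by simp
  have ker1: "{h \<in> H. A h = 0 \<and> B h = 0} = R ` {h \<in> H. A' h = 0 \<and> B' h = 0}"
    using Compr_image_eq[of R H "\<lambda>h. A h = 0 \<and> B h = 0"] by (simp add: RH A B R_eq_0)
  have stage1: "{0} = {h \<in> H. A h = 0 \<and> B h = 0} \<longleftrightarrow> {0} = {h \<in> H. A' h = 0 \<and> B' h = 0}"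
    using inj_image_eq_iff[OF inj, of "{0}" "{h \<in> H. A' h = 0 \<and> B' h = 0}"]
    by (simp only: R_zero ker1)
  have ker2: "{(h1, h2). h1 \<in> H \<and> h2 \<in> H \<and> C h2 - D h1 = 0} = {z \<in> H \<times> H. C (snd z) - D (fst z) = 0}"
    for C D :: "'v \<Rightarrow> 'v"
    by auto
  have "{z \<in> H \<times> H. A (snd z) - B (fst z) = 0} = map_prod R R ` {z \<in> H \<times> H. A' (snd z) - B' (fst z) = 0}"
    using Compr_image_eq[of "map_prod R R" "H \<times> H" "\<lambda>z. A (snd z) - B (fst z) = 0"]
    by (simp add: HH A B R_diff[symmetric] R_eq_0)
  moreover have "(\<lambda>h. (A h, B h)) ` H = map_prod R R ` (\<lambda>h. (A' h, B' h)) ` H"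
    by (subst RH[symmetric]) (simp add: image_image A B)
  ultimately have stage2: "(\<lambda>h. (A h, B h)) ` H = {(h1, h2). h1 \<in> H \<and> h2 \<in> H \<and> A h2 - B h1 = 0}
      \<longleftrightarrow> (\<lambda>h. (A' h, B' h)) ` H = {(h1, h2). h1 \<in> H \<and> h2 \<in> H \<and> A' h2 - B' h1 = 0}"
    by (simp only: ker2 inj_image_eq_iff[OF inj2])
  have "(\<lambda>(h1, h2). A h2 - B h1) ` (H \<times> H) = R ` (\<lambda>(h1, h2). A' h2 - B' h1) ` (H \<times> H)"
    by (subst HH[symmetric]) (simp add: image_image A B R_diff case_prod_beta)
  then have stage3: "(\<lambda>(h1, h2). A h2 - B h1) ` (H \<times> H) = H
      \<longleftrightarrow> (\<lambda>(h1, h2). A' h2 - B' h1) ` (H \<times> H) = H"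
    using inj_image_eq_iff[OF inj, of _ H] by (simp only: RH)
  show ?thesis
    unfolding koszul_breaks_at_def stage1 stage2 stage3 ..
qed

lemma koszul_breaks_at_M_psi_sym:
  "koszul_breaks_at H2D_l2Z (op_minus_scalar M_psi1 l1) (op_minus_scalar M_psi2 l2) n \<longleftrightarrow>
    koszul_breaks_at H2D_l2Z (op_minus_scalar M_psi1 l2) (op_minus_scalar M_psi2 l1) n"
proof -
  have "koszul_breaks_at H2D_l2Z (op_minus_scalar M_psi1 l1) (op_minus_scalar M_psi2 l2) n \<longleftrightarrow>
      koszul_breaks_at H2D_l2Z (op_minus_scalar M_psi2 l1) (op_minus_scalar M_psi1 l2) n"
    by (rule koszul_breaks_at_conj[OF bij_reflect reflect_diff reflect_image_H2D_l2Z])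
      (simp_all add: op_minus_scalar_M_psi1_reflect op_minus_scalar_M_psi2_reflect)
  also have "\<dots> \<longleftrightarrow> koszul_breaks_at H2D_l2Z (op_minus_scalar M_psi1 l2) (op_minus_scalar M_psi2 l1) n"
    by (rule koszul_breaks_at_swap[OF H2D_l2Z_zero H2D_l2Z_diff])
      (simp_all add: op_minus_scalar_diff M_psi1_diff M_psi2_diff)
  finally show ?thesis .
qed

section \<open>The Taylor spectrum of \<open>(M_psi1, M_psi2)\<close>\<close>

lemma koszul_not_breaks_outside:
  assumes "1 < cmod l1 \<or> 1 < cmod l2"
  shows "\<not> koszul_breaks_at H2D_l2Z (op_minus_scalar M_psi1 l1) (op_minus_scalar M_psi2 l2) n"
proof -
  have "\<not> koszul_breaks_at H2D_l2Z (op_minus_scalar M_psi1 l) (op_minus_scalar M_psi2 l') n"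
    if "1 < cmod l" for l l'
    by (rule koszul_not_breaks_if_bij[OF H2D_l2Z_zero H2D_l2Z_diff])
      (simp_all add: op_minus_scalar_in_H2D_l2Z M_psi2_in_H2D_l2Z op_minus_scalar_diff
        M_psi1_diff M_psi2_diff op_minus_scalar_M_psi_commute bij_betw_op_minus_scalar_M_psi1 that)
  then show ?thesis
    using assms koszul_breaks_at_M_psi_sym by blast
qed

lemma op_minus_scalar_M_psi1_geometric_row:
  "op_minus_scalar M_psi1 l (first_row (\<lambda>j. l ^ j)) = (\<lambda>k n. if k = 0 \<and> n = -1 then 1 else 0)"
proof (intro ext)
  fix k n
  have "l ^ nat (n + 1) = l * l ^ nat n" if "0 \<le> n"
    using that by (simp add: nat_add_distrib)
  then show "op_minus_scalar M_psi1 l (first_row (\<lambda>j. l ^ j)) k n = (if k = 0 \<and> n = -1 then 1 else 0)"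
    by (auto simp: op_minus_scalar_def M_psi1_apply first_row_def)
qed

lemma op_minus_scalar_M_psi1_ne_reflect_first_row:
  assumes l1: "cmod l1 < 1" and h: "h \<in> H2D_l2Z"
  shows "op_minus_scalar M_psi1 l1 h \<noteq> reflect (first_row (\<lambda>j. l2 ^ j))"
proof
  assume eq: "op_minus_scalar M_psi1 l1 h = reflect (first_row (\<lambda>j. l2 ^ j))"
  obtain M where M: "\<And>k n. cmod (h k n) \<le> M"
    using h square_summable_bounded unfolding H2D_l2Z_iff by fastforce
  \<comment> \<open>Along the antidiagonal the equation forces \<open>a j = - l1 ^ -(j + 1)\<close>, which is unbounded.\<close>
  define a where "a j = h j (- int j - 2)" for j
  have eq_at: "M_psi1 h j (- int j - 2) - l1 * a j = (if j = 0 then 1 else 0)" for j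
    using fun_cong[OF fun_cong[OF eq, of j], of "- int j - 2"]
    by (simp add: op_minus_scalar_def a_def reflect_def first_row_def)
  have a0: "l1 * a 0 = -1"
    using eq_at[of 0] by (simp add: M_psi1_apply) (metis minus_minus)
  have aSuc: "a j = l1 * a (Suc j)" for j
    using eq_at[of "Suc j"] by (simp add: M_psi1_apply a_def algebra_simps)
  have l1_0: "l1 \<noteq> 0"
    using a0 by auto
  have a_eq: "a j = - (inverse l1 ^ Suc j)" for j
  proof (induction j)
    case 0
    show ?case using a0 l1_0 by (simp add: field_simps)
  next
    case (Suc j)
    then show ?case using aSuc[of j] l1_0 by (simp add: field_simps)
  qed
  have "1 < inverse (cmod l1)"
    using l1 l1_0 by (simp add: one_less_inverse_iff)
  then obtain j where "M < inverse (cmod l1) ^ j"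
    using real_arch_pow by blast
  also have "\<dots> \<le> inverse (cmod l1) ^ Suc j"
    using \<open>1 < inverse (cmod l1)\<close> by (intro power_increasing) auto
  also have "\<dots> = cmod (a j)"
    by (simp add: a_eq norm_power norm_inverse del: power_Suc)
  finally show False
    using M[of j "- int j - 2"] by (simp add: a_def)
qed

lemma koszul_breaks_at_2_interior:
  assumes l1: "cmod l1 < 1" and l2: "cmod l2 < 1"
  shows "koszul_breaks_at H2D_l2Z (op_minus_scalar M_psi1 l1) (op_minus_scalar M_psi2 l2) 2"
proof -
  define h1 where "h1 = reflect (first_row (\<lambda>j. l2 ^ j))"
  define h2 where "h2 = first_row (\<lambda>j. l1 ^ j)"
  have H: "h1 \<in> H2D_l2Z" "h2 \<in> H2D_l2Z"
    using geometric_row_in_H2D_l2Z l1 l2 by (simp_all add: h1_def h2_def reflect_in_H2D_l2Z_iff)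
  have "op_minus_scalar M_psi2 l2 h1 = reflect (\<lambda>k n. if k = 0 \<and> n = -1 then 1 else 0)"
    by (simp add: h1_def op_minus_scalar_M_psi2_reflect op_minus_scalar_M_psi1_geometric_row)
  also have "\<dots> = op_minus_scalar M_psi1 l1 h2"
    by (auto simp: fun_eq_iff reflect_def h2_def op_minus_scalar_M_psi1_geometric_row)
  finally have cycle: "op_minus_scalar M_psi1 l1 h2 - op_minus_scalar M_psi2 l2 h1 = 0"
    by simp
  have "(h1, h2) \<notin> (\<lambda>h. (op_minus_scalar M_psi1 l1 h, op_minus_scalar M_psi2 l2 h)) ` H2D_l2Z"
  proof
    assume "(h1, h2) \<in> (\<lambda>h. (op_minus_scalar M_psi1 l1 h, op_minus_scalar M_psi2 l2 h)) ` H2D_l2Z"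
    then obtain h where "h \<in> H2D_l2Z" "op_minus_scalar M_psi1 l1 h = h1"
      by auto
    then show False
      using op_minus_scalar_M_psi1_ne_reflect_first_row[OF l1] by (simp add: h1_def)
  qed
  then show ?thesis
    unfolding koszul_breaks_at_def using H cycle by auto
qed

definition diagonal_sum :: "complex \<Rightarrow> nat \<Rightarrow> (nat \<Rightarrow> int \<Rightarrow> complex) \<Rightarrow> complex" where
  "diagonal_sum l m x = (\<Sum>k. l ^ k * x k (int k + int m))"

lemma diagonal_sum_summable:
  assumes "cmod l < 1" and "x \<in> H2D_l2Z"
  shows "summable (\<lambda>k. l ^ k * x k (int k + int m))"
proof -
  obtain M where "\<And>k n. cmod (x k n) \<le> M"
    using assms(2) square_summable_bounded unfolding H2D_l2Z_iff by fastforce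
  then show ?thesis
    using power_series_bounded_coeffs(1)[OF assms(1), of "\<lambda>k. x k (int k + int m)" M] by blast
qed

lemma diagonal_sum_bounded:
  assumes "cmod l < 1" and "x \<in> H2D_l2Z"
  shows "\<exists>C. \<forall>m. cmod (diagonal_sum l m x) \<le> C"
proof -
  obtain M where "\<And>k n. cmod (x k n) \<le> M"
    using assms(2) square_summable_bounded unfolding H2D_l2Z_iff by fastforce
  then have "cmod (diagonal_sum l m x) \<le> M / (1 - cmod l)" for m
    unfolding diagonal_sum_def by (rule power_series_bounded_coeffs(2)[OF assms(1)])
  then show ?thesis
    by blast
qed

lemma diagonal_sum_diff:
  assumes "cmod l < 1" and "x \<in> H2D_l2Z" and "y \<in> H2D_l2Z"
  shows "diagonal_sum l m (x - y) = diagonal_sum l m x - diagonal_sum l m y"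
  unfolding diagonal_sum_def
  using suminf_diff[OF diagonal_sum_summable[OF assms(1,2)] diagonal_sum_summable[OF assms(1,3)]]
  by (simp add: right_diff_distrib)

lemma diagonal_sum_op_minus_scalar:
  assumes "cmod l < 1" and "x \<in> H2D_l2Z" and "T x \<in> H2D_l2Z"
  shows "diagonal_sum l m (op_minus_scalar T c x) = diagonal_sum l m (T x) - c * diagonal_sum l m x"
proof -
  note sx = diagonal_sum_summable[OF assms(1,2)] and sT = diagonal_sum_summable[OF assms(1,3)]
  have "(\<lambda>k. l ^ k * op_minus_scalar T c x k (int k + int m)) =
      (\<lambda>k. l ^ k * T x k (int k + int m) - c * (l ^ k * x k (int k + int m)))"
    by (simp add: op_minus_scalar_def algebra_simps)
  then show ?thesis
    unfolding diagonal_sum_def using suminf_diff[OF sT summable_mult[OF sx]] suminf_mult[OF sx]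
    by simp
qed

lemma diagonal_sum_M_psi1: "diagonal_sum l m (M_psi1 x) = diagonal_sum l (Suc m) x"
  by (simp add: diagonal_sum_def M_psi1_apply ac_simps)

lemma diagonal_sum_M_psi2:
  assumes "cmod l < 1" and "x \<in> H2D_l2Z"
  shows "diagonal_sum l m (M_psi2 x) = l * diagonal_sum l m x"
proof -
  let ?f = "\<lambda>k. l ^ k * M_psi2 x k (int k + int m)"
  have shift: "?f (Suc k) = l * (l ^ k * x k (int k + int m))" for k
    by (simp add: M_psi2_apply)
  have "summable (\<lambda>k. ?f (Suc k))"
    unfolding shift by (intro summable_mult diagonal_sum_summable assms)
  then have "summable ?f"
    using summable_Suc_iff[of ?f] by blast
  then have "suminf ?f = (\<Sum>k. ?f (Suc k))"
    using suminf_split_head[of ?f] by (simp add: M_psi2_apply)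
  also have "\<dots> = l * diagonal_sum l m x"
    unfolding shift diagonal_sum_def by (rule suminf_mult[OF diagonal_sum_summable[OF assms]])
  finally show ?thesis
    by (simp add: diagonal_sum_def)
qed

lemma koszul_breaks_at_3_boundary:
  assumes l1: "cmod l1 = 1" and l2: "cmod l2 < 1"
  shows "koszul_breaks_at H2D_l2Z (op_minus_scalar M_psi1 l1) (op_minus_scalar M_psi2 l2) 3"
proof -
  define y where "y = first_row (\<lambda>j. l1 ^ Suc j / of_nat (Suc j))"
  have "(cmod (l1 ^ Suc j / of_nat (Suc j)))\<^sup>2 = 1 / real (Suc j) ^ 2" for j
    using l1 by (simp add: norm_divide norm_power power_divide del: of_nat_Suc power_Suc)
  then have y_H: "y \<in> H2D_l2Z"
    unfolding y_def using summable_inverse_Suc_square by (intro first_row_in_H2D_l2Z) simp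
  have diagonal_y: "diagonal_sum l2 m y = l1 ^ Suc m / of_nat (Suc m)" for m
  proof -
    have "(\<lambda>k. l2 ^ k * y k (int k + int m)) = (\<lambda>k. if k = 0 then l1 ^ Suc m / of_nat (Suc m) else 0)"
      by (auto simp: fun_eq_iff y_def first_row_def)
    then have "(\<lambda>k. l2 ^ k * y k (int k + int m)) sums (l1 ^ Suc m / of_nat (Suc m))"
      using sums_single[of 0 "\<lambda>_. l1 ^ Suc m / of_nat (Suc m)"] by simp
    then show ?thesis
      unfolding diagonal_sum_def by (rule sums_unique[symmetric])
  qed
  have "y \<notin> (\<lambda>(h1, h2). op_minus_scalar M_psi1 l1 h2 - op_minus_scalar M_psi2 l2 h1) ` (H2D_l2Z \<times> H2D_l2Z)"
  proof
    assume "y \<in> (\<lambda>(h1, h2). op_minus_scalar M_psi1 l1 h2 - op_minus_scalar M_psi2 l2 h1) ` (H2D_l2Z \<times> H2D_l2Z)"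
    then obtain x1 x2 where x: "x1 \<in> H2D_l2Z" "x2 \<in> H2D_l2Z"
      and y: "y = op_minus_scalar M_psi1 l1 x2 - op_minus_scalar M_psi2 l2 x1"
      by auto
    have H: "op_minus_scalar M_psi1 l1 x2 \<in> H2D_l2Z" "op_minus_scalar M_psi2 l2 x1 \<in> H2D_l2Z"
      using x by (simp_all add: op_minus_scalar_in_H2D_l2Z M_psi1_in_H2D_l2Z M_psi2_in_H2D_l2Z)
    \<comment> \<open>Diagonal sums kill the range of \<open>M_psi2 - l2\<close>, leaving a recurrence of harmonic growth.\<close>
    define c where "c m = diagonal_sum l2 m x2" for m
    have "c (Suc m) - l1 * c m = l1 ^ Suc m / of_nat (Suc m)" for m
      using diagonal_sum_diff[OF l2 H, of m] diagonal_y[of m] x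
      by (simp add: y c_def diagonal_sum_op_minus_scalar l2 M_psi1_in_H2D_l2Z M_psi2_in_H2D_l2Z
          diagonal_sum_M_psi1 diagonal_sum_M_psi2)
    moreover obtain C where "\<And>m. cmod (c m) \<le> C"
      using diagonal_sum_bounded[OF l2 x(2)] by (auto simp: c_def)
    ultimately show False
      by (rule harmonic_recurrence_unbounded[OF l1])
  qed
  with y_H show ?thesis
    unfolding koszul_breaks_at_def by auto
qed

text \<open>Row \<open>k\<close> of the tent carries \<open>2 k + 1\<close> entries \<open>1 / (k + 1)\<close>, so its norm diverges like the
  harmonic series; but \<open>M_psi1 - 1\<close> only produces differences of neighbouring entries, and
  these are square summable.\<close>

definition tent :: "nat \<Rightarrow> int \<Rightarrow> complex" where
  "tent k n = (if - int k - 1 \<le> n \<and> n \<le> int k - 1 then 1 / of_nat (Suc k) else 0)"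

lemma reflect_tent: "reflect tent = tent"
  by (auto simp: fun_eq_iff reflect_def tent_def)

lemma tent_not_in_H2D_l2Z: "tent \<notin> H2D_l2Z"
proof
  assume "tent \<in> H2D_l2Z"
  then obtain B where B: "\<And>F. finite F \<Longrightarrow> (\<Sum>i\<in>F. (cmod (case_prod tent i))\<^sup>2) \<le> B"
    by (auto simp: H2D_l2Z_iff square_summable_iff_bounded_sums)
  have "harm K \<le> B" for K
  proof -
    have row: "(\<Sum>n\<in>{- int k - 1 .. int k - 1}. (cmod (tent k n))\<^sup>2) = real (2 * k + 1) / real (Suc k) ^ 2"
      for k
      by (simp add: tent_def norm_divide power_divide del: of_nat_Suc)
    have "harm K = (\<Sum>k<K. inverse (real (Suc k)))"
      by (simp add: harm_altdef)
    also have "\<dots> \<le> (\<Sum>k<K. real (2 * k + 1) / real (Suc k) ^ 2)"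
      by (intro sum_mono) (simp add: power2_eq_square field_simps del: of_nat_Suc)
    also have "\<dots> = (\<Sum>k<K. \<Sum>n\<in>{- int k - 1 .. int k - 1}. (cmod (tent k n))\<^sup>2)"
      by (simp add: row)
    also have "\<dots> = (\<Sum>i\<in>Sigma {..<K} (\<lambda>k. {- int k - 1 .. int k - 1}). (cmod (case_prod tent i))\<^sup>2)"
      by (subst sum.Sigma) (auto simp: case_prod_beta)
    also have "\<dots> \<le> B"
      by (rule B) auto
    finally show ?thesis .
  qed
  then show False
    using harm_unbounded[of B] by (meson not_le)
qed

lemma op_minus_scalar_M_psi1_tent:
  "op_minus_scalar M_psi1 1 tent k n =
     (if n = int k - 1 then - 1 / of_nat (Suc k) else 0) +
     (if 1 \<le> k \<and> - int k - 1 \<le> n \<and> n \<le> -2 then 1 / (of_nat k * of_nat (Suc k)) else 0)"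
proof (cases "-1 \<le> n \<or> k = 0")
  case True
  then show ?thesis
    by (auto simp: op_minus_scalar_def M_psi1_apply tent_def)
next
  case False
  then have "of_nat k \<noteq> (0 :: complex)"
    by simp
  then have "1 / of_nat k - 1 / of_nat (Suc k) = (1 / (of_nat k * of_nat (Suc k)) :: complex)"
    by (simp add: diff_frac_eq del: of_nat_Suc) (simp add: algebra_simps)
  with False show ?thesis
    by (auto simp: op_minus_scalar_def M_psi1_apply tent_def of_nat_diff)
qed

lemma op_minus_scalar_M_psi1_tent_in_H2D_l2Z: "op_minus_scalar M_psi1 1 tent \<in> H2D_l2Z"
proof -
  have "summable (\<lambda>k. real (card {int k - 1}) * (1 / real (Suc k))\<^sup>2)"
    using summable_inverse_Suc_square by (simp add: power_divide)
  then have diagonal: "(\<lambda>k n. if n = int k - 1 then - 1 / of_nat (Suc k) else 0 :: complex) \<in> H2D_l2Z"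
    by (rule row_bounded_in_H2D_l2Z[where c="\<lambda>k. 1 / real (Suc k)" and R="\<lambda>k. {int k - 1}", rotated -1])
      (auto simp: norm_divide split: if_splits simp del: of_nat_Suc)
  have "summable (\<lambda>k. real k * (inverse (real k * real (Suc k)))\<^sup>2)"
  proof (rule summable_comparison_test'[OF summable_inverse_Suc_square, of 0])
    fix k :: nat
    show "norm (real k * (inverse (real k * real (Suc k)))\<^sup>2) \<le> 1 / real (Suc k) ^ 2"
      by (cases k) (simp_all add: power2_eq_square field_simps del: of_nat_Suc)
  qed
  then have off_diagonal: "(\<lambda>k n. if 1 \<le> k \<and> - int k - 1 \<le> n \<and> n \<le> -2
      then 1 / (of_nat k * of_nat (Suc k)) else 0 :: complex) \<in> H2D_l2Z"
    by (intro row_bounded_in_H2D_l2Z[where c="\<lambda>k. inverse (real k * real (Suc k))"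
          and R="\<lambda>k. {- int k - 1 .. -2}"])
      (auto simp: norm_divide norm_mult norm_inverse divide_inverse split: if_splits simp del: of_nat_Suc)
  show ?thesis
    using H2D_l2Z_lincomb[OF diagonal off_diagonal, of 1 1]
    by (simp add: op_minus_scalar_M_psi1_tent[abs_def])
qed

text \<open>Along \<open>psi1_index\<close> the exponent \<open>torus_exp1\<close> grows by one and \<open>torus_exp2\<close> is constant, and
  vice versa along the index map of \<open>M_psi2\<close>; so multiplication by \<open>torus_phase l1 l2\<close> turns
  \<open>M_psi_i - l_i\<close> into \<open>l_i (M_psi_i - 1)\<close>.\<close>

definition torus_exp1 :: "nat \<Rightarrow> int \<Rightarrow> int" where
  "torus_exp1 k n = (if 0 \<le> n then n - int k else - int k - 1)"

definition torus_exp2 :: "nat \<Rightarrow> int \<Rightarrow> int" where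
  "torus_exp2 k n = (if 0 \<le> n then - int k else - int k - n - 1)"

definition torus_phase :: "complex \<Rightarrow> complex \<Rightarrow> nat \<Rightarrow> int \<Rightarrow> complex" where
  "torus_phase l1 l2 k n = l1 powi torus_exp1 k n * l2 powi torus_exp2 k n"

lemma norm_torus_phase:
  "cmod l1 = 1 \<Longrightarrow> cmod l2 = 1 \<Longrightarrow> cmod (torus_phase l1 l2 k n) = 1"
  by (simp add: torus_phase_def norm_mult norm_power_int)

lemma M_psi1_torus_phase:
  assumes l1: "l1 \<noteq> 0"
  shows "M_psi1 (\<lambda>k n. torus_phase l1 l2 k n * g k n) k n = l1 * torus_phase l1 l2 k n * M_psi1 g k n"
proof (cases "-1 \<le> n")
  case True
  then have "torus_exp1 k (n + 1) = torus_exp1 k n + 1" "torus_exp2 k (n + 1) = torus_exp2 k n"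
    by (auto simp: torus_exp1_def torus_exp2_def)
  then show ?thesis
    using True l1 by (simp add: M_psi1_apply torus_phase_def power_int_add_1')
next
  case False
  then have "torus_exp1 (k - 1) (n + 1) = torus_exp1 k n + 1" "torus_exp2 (k - 1) (n + 1) = torus_exp2 k n"
    if "k > 0"
    using that by (auto simp: torus_exp1_def torus_exp2_def of_nat_diff)
  then show ?thesis
    using False l1 by (simp add: M_psi1_apply torus_phase_def power_int_add_1')
qed

lemma M_psi2_torus_phase:
  assumes l2: "l2 \<noteq> 0"
  shows "M_psi2 (\<lambda>k n. torus_phase l1 l2 k n * g k n) k n = l2 * torus_phase l1 l2 k n * M_psi2 g k n"
proof (cases "n < 0")
  case True
  then have "torus_exp1 k (n - 1) = torus_exp1 k n" "torus_exp2 k (n - 1) = torus_exp2 k n + 1"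
    by (auto simp: torus_exp1_def torus_exp2_def)
  then show ?thesis
    using True l2 by (simp add: M_psi2_apply torus_phase_def power_int_add_1' mult_ac)
next
  case False
  then have "torus_exp1 (k - 1) (n - 1) = torus_exp1 k n" "torus_exp2 (k - 1) (n - 1) = torus_exp2 k n + 1"
    if "k > 0"
    using that by (auto simp: torus_exp1_def torus_exp2_def of_nat_diff)
  then show ?thesis
    using False l2 by (simp add: M_psi2_apply torus_phase_def power_int_add_1' mult_ac)
qed

lemma op_minus_scalar_torus_phase:
  assumes "l1 \<noteq> 0" and "l2 \<noteq> 0"
  shows "op_minus_scalar M_psi1 l1 (\<lambda>k n. torus_phase l1 l2 k n * g k n) =
      (\<lambda>k n. l1 * torus_phase l1 l2 k n * op_minus_scalar M_psi1 1 g k n)"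
    and "op_minus_scalar M_psi2 l2 (\<lambda>k n. torus_phase l1 l2 k n * g k n) =
      (\<lambda>k n. l2 * torus_phase l1 l2 k n * op_minus_scalar M_psi2 1 g k n)"
  unfolding op_minus_scalar_def M_psi1_torus_phase[OF assms(1)] M_psi2_torus_phase[OF assms(2)]
  by (simp_all add: fun_eq_iff algebra_simps)

lemma M_psi_common_kernel:
  assumes l1: "l1 \<noteq> 0" and l2: "l2 \<noteq> 0"
    and ker1: "op_minus_scalar M_psi1 l1 g = 0" and ker2: "op_minus_scalar M_psi2 l2 g = 0"
  shows "g = 0"
proof -
  have E1: "M_psi1 g k n = l1 * g k n" and E2: "M_psi2 g k n = l2 * g k n" for k n
    using fun_cong[OF fun_cong[OF ker1, of k], of n] fun_cong[OF fun_cong[OF ker2, of k], of n]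
    by (simp_all add: op_minus_scalar_def)
  have row_zero: "g k n = 0" if previous: "\<And>n. 0 < k \<Longrightarrow> g (k - 1) n = 0" for k n
  proof -
    have nonneg: "g k n = 0" if "0 \<le> n" for n
      using E2[of k n] that previous l2 by (simp add: M_psi2_apply split: if_splits)
    have neg: "g k n = 0" if "n \<le> -2" for n
      using E1[of k n] that previous l1 by (simp add: M_psi1_apply split: if_splits)
    have "g k (-1) = 0"
      using E1[of k "-1"] nonneg[of 0] l1 by (simp add: M_psi1_apply)
    moreover have "n \<le> -2 \<or> n = -1 \<or> 0 \<le> n"
      by linarith
    ultimately show ?thesis
      using nonneg neg by blast
  qed
  have "g k n = 0" for k n
    by (induction k arbitrary: n) (auto intro: row_zero)
  then show ?thesis
    by (simp add: fun_eq_iff)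
qed

lemma koszul_breaks_at_2_torus:
  assumes l1: "cmod l1 = 1" and l2: "cmod l2 = 1"
  shows "koszul_breaks_at H2D_l2Z (op_minus_scalar M_psi1 l1) (op_minus_scalar M_psi2 l2) 2"
proof -
  have l0: "l1 \<noteq> 0" "l2 \<noteq> 0"
    using l1 l2 by auto
  define h where "h = (\<lambda>k n. torus_phase l1 l2 k n * tent k n)"
  define x1 where "x1 = op_minus_scalar M_psi1 l1 h"
  define x2 where "x2 = op_minus_scalar M_psi2 l2 h"
  have "op_minus_scalar M_psi2 1 tent \<in> H2D_l2Z"
    using op_minus_scalar_M_psi1_tent_in_H2D_l2Z
    by (metis op_minus_scalar_M_psi2_reflect reflect_tent reflect_in_H2D_l2Z_iff)
  then have H: "x1 \<in> H2D_l2Z" "x2 \<in> H2D_l2Z"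
    using op_minus_scalar_M_psi1_tent_in_H2D_l2Z
    by (simp_all add: H2D_l2Z_comparison x1_def x2_def h_def op_minus_scalar_torus_phase[OF l0]
        norm_mult norm_torus_phase l1 l2)
  have cycle: "op_minus_scalar M_psi1 l1 x2 - op_minus_scalar M_psi2 l2 x1 = 0"
    by (simp add: x1_def x2_def op_minus_scalar_M_psi_commute)
  have "(x1, x2) \<notin> (\<lambda>g. (op_minus_scalar M_psi1 l1 g, op_minus_scalar M_psi2 l2 g)) ` H2D_l2Z"
  proof
    assume "(x1, x2) \<in> (\<lambda>g. (op_minus_scalar M_psi1 l1 g, op_minus_scalar M_psi2 l2 g)) ` H2D_l2Z"
    then obtain g where g: "g \<in> H2D_l2Z" "op_minus_scalar M_psi1 l1 g = x1" "op_minus_scalar M_psi2 l2 g = x2"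
      by auto
    then have "op_minus_scalar M_psi1 l1 (h - g) = 0" "op_minus_scalar M_psi2 l2 (h - g) = 0"
      by (simp_all add: x1_def x2_def op_minus_scalar_diff M_psi1_diff M_psi2_diff)
    then have "h = g"
      using M_psi_common_kernel[OF l0] by fastforce
    with g(1) have "h \<in> H2D_l2Z"
      by simp
    then have "tent \<in> H2D_l2Z"
      by (rule H2D_l2Z_comparison) (simp add: h_def norm_mult norm_torus_phase l1 l2)
    then show False
      using tent_not_in_H2D_l2Z by contradiction
  qed
  then show ?thesis
    unfolding koszul_breaks_at_def using H cycle by auto
qed

lemma koszul_breaks_in_closed_bidisc:
  assumes "cmod l1 \<le> 1" and "cmod l2 \<le> 1"
  shows "\<exists>n\<in>{1, 2, 3}. koszul_breaks_at H2D_l2Z (op_minus_scalar M_psi1 l1) (op_minus_scalar M_psi2 l2) n"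
proof -
  consider "cmod l1 < 1" "cmod l2 < 1" | "cmod l1 = 1" "cmod l2 < 1" | "cmod l1 < 1" "cmod l2 = 1"
    | "cmod l1 = 1" "cmod l2 = 1"
    using assms by fastforce
  then show ?thesis
  proof cases
    case 1
    then show ?thesis using koszul_breaks_at_2_interior by blast
  next
    case 2
    then show ?thesis using koszul_breaks_at_3_boundary by blast
  next
    case 3
    then show ?thesis using koszul_breaks_at_3_boundary koszul_breaks_at_M_psi_sym by blast
  next
    case 4
    then show ?thesis using koszul_breaks_at_2_torus by blast
  qed
qed

lemma taylor_spectrum_M_psi:
  "taylor_spectrum H2D_l2Z M_psi1 M_psi2 = {(z1, z2). cmod z1 \<le> 1 \<and> cmod z2 \<le> 1}"
proof (intro set_eqI iffI)
  fix z :: "complex \<times> complex"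
  assume "z \<in> taylor_spectrum H2D_l2Z M_psi1 M_psi2"
  then show "z \<in> {(z1, z2). cmod z1 \<le> 1 \<and> cmod z2 \<le> 1}"
    using koszul_not_breaks_outside by (force simp: taylor_spectrum_def not_le)
next
  fix z :: "complex \<times> complex"
  assume "z \<in> {(z1, z2). cmod z1 \<le> 1 \<and> cmod z2 \<le> 1}"
  then show "z \<in> taylor_spectrum H2D_l2Z M_psi1 M_psi2"
    using koszul_breaks_in_closed_bidisc by (auto simp: taylor_spectrum_def)
qed

section \<open>Unitary equivalence with \<open>(tau1, tau2)\<close>\<close>

text \<open>The coefficient of \<open>z1^p z2^q\<close> is entry \<open>p - q\<close> of the Taylor coefficient of order \<open>min p q\<close>.\<close>

definition bidisc_index :: "nat \<times> nat \<Rightarrow> nat \<times> int" where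
  "bidisc_index = (\<lambda>(p, q). (min p q, int p - int q))"

definition to_bidisc :: "(nat \<Rightarrow> int \<Rightarrow> complex) \<Rightarrow> nat \<times> nat \<Rightarrow> complex" where
  "to_bidisc a = case_prod a \<circ> bidisc_index"

lemma bij_bidisc_index: "bij bidisc_index"
proof (rule bij_betw_byWitness[where f' = "\<lambda>(k, n). (k + nat n, k + nat (- n))"])
  show "\<forall>m\<in>UNIV. (\<lambda>(k, n). (k + nat n, k + nat (- n))) (bidisc_index m) = m"
    by (auto simp: bidisc_index_def min_def)
qed (auto simp: bidisc_index_def)

lemma H2D2_eq: "H2D2 = {f. square_summable f}"
  by (simp add: H2D2_def square_summable_def)

lemma to_bidisc_in_H2D2_iff: "to_bidisc a \<in> H2D2 \<longleftrightarrow> a \<in> H2D_l2Z"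
  by (simp add: H2D2_eq H2D_l2Z_iff to_bidisc_def square_summable_reindex bij_bidisc_index)

lemma bij_betw_to_bidisc: "bij_betw to_bidisc H2D_l2Z H2D2"
proof (rule bij_betw_byWitness[where f' = "\<lambda>b. curry (b \<circ> inv bidisc_index)"])
  have right: "bidisc_index \<circ> inv bidisc_index = id" and left: "inv bidisc_index \<circ> bidisc_index = id"
    using bij_bidisc_index by (simp_all add: bij_is_surj bij_is_inj flip: surj_iff inj_iff)
  show "\<forall>a\<in>H2D_l2Z. curry (to_bidisc a \<circ> inv bidisc_index) = a"
    by (simp add: to_bidisc_def comp_assoc right)
  show "\<forall>b\<in>H2D2. to_bidisc (curry (b \<circ> inv bidisc_index)) = b"
    by (simp add: to_bidisc_def comp_assoc left)
  show "to_bidisc ` H2D_l2Z \<subseteq> H2D2"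
    using to_bidisc_in_H2D2_iff by auto
  show "(\<lambda>b. curry (b \<circ> inv bidisc_index)) ` H2D2 \<subseteq> H2D_l2Z"
  proof (rule image_subsetI)
    fix b
    assume "b \<in> H2D2"
    moreover have "to_bidisc (curry (b \<circ> inv bidisc_index)) = b"
      by (simp add: to_bidisc_def comp_assoc left)
    ultimately show "curry (b \<circ> inv bidisc_index) \<in> H2D_l2Z"
      using to_bidisc_in_H2D2_iff by metis
  qed
qed

lemma H2D2_norm_to_bidisc: "a \<in> H2D_l2Z \<Longrightarrow> H2D2_norm (to_bidisc a) = H2D_norm a"
  using infsum_reindex_bij_betw[OF bij_bidisc_index, of "\<lambda>i. (cmod (case_prod a i))\<^sup>2"]
  by (simp add: H2D2_norm_def H2D_norm_eq to_bidisc_def)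

definition U_idx_inv :: "nat \<times> nat \<Rightarrow> nat \<times> nat" where
  "U_idx_inv = (\<lambda>(p, q). if q + 2 \<le> p then (p - 2, q) else if p = q + 1 then (p - 1, p) else (p, q + 2))"

lemma U_op_apply: "U_op f m = f (U_idx_inv m)"
proof -
  have "{m'. U_idx m' = m} = {U_idx_inv m}"
    by (cases m) (auto simp: U_idx_def U_idx_inv_def split: if_splits)
  then show ?thesis
    by (simp add: U_op_def)
qed

lemma to_bidisc_M_psi1: "to_bidisc (M_psi1 a) = tau1 (to_bidisc a)"
proof
  fix m :: "nat \<times> nat"
  obtain p q where m: "m = (p, q)"
    by (cases m)
  show "to_bidisc (M_psi1 a) m = tau1 (to_bidisc a) m"
    unfolding m
    by (auto simp: to_bidisc_def bidisc_index_def tau1_def U_adj_def M_z1_def U_idx_def M_psi1_apply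
        min_def) (intro arg_cong2[where f=a]; arith)+
qed

lemma to_bidisc_M_psi2: "to_bidisc (M_psi2 a) = tau2 (to_bidisc a)"
proof
  fix m :: "nat \<times> nat"
  obtain p q where m: "m = (p, q)"
    by (cases m)
  show "to_bidisc (M_psi2 a) m = tau2 (to_bidisc a) m"
    unfolding m
    by (auto simp: to_bidisc_def bidisc_index_def tau2_def U_op_apply M_z2_def U_idx_inv_def
        M_psi2_apply min_def) (intro arg_cong2[where f=a]; arith)+
qed

lemma M_psi_unitarily_equivalent_tau: "jointly_unitarily_equivalent M_psi1 M_psi2 tau1 tau2"
  unfolding jointly_unitarily_equivalent_def
proof (intro exI[of _ to_bidisc] conjI ballI allI)
  show "bij_betw to_bidisc H2D_l2Z H2D2"
    by (rule bij_betw_to_bidisc)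
  fix a
  assume "a \<in> H2D_l2Z"
  then show "H2D2_norm (to_bidisc a) = H2D_norm a"
    by (rule H2D2_norm_to_bidisc)
  show "to_bidisc (M_psi1 a) = tau1 (to_bidisc a)"
    by (rule to_bidisc_M_psi1)
  show "to_bidisc (M_psi2 a) = tau2 (to_bidisc a)"
    by (rule to_bidisc_M_psi2)
next
  fix a b c d
  show "to_bidisc (\<lambda>k n. c * a k n + d * b k n) = (\<lambda>m. c * to_bidisc a m + d * to_bidisc b m)"
    by (auto simp: to_bidisc_def fun_eq_iff split: prod.splits)
qed

theorem lemma3p7:
  shows "jointly_unitarily_equivalent M_psi1 M_psi2 tau1 tau2
    \<and> taylor_spectrum H2D_l2Z M_psi1 M_psi2 = {(z1, z2). cmod z1 \<le> 1 \<and> cmod z2 \<le> 1}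
    \<and> (\<forall>l1 l2. cmod l1 < 1 \<and> cmod l2 < 1 \<longrightarrow>
         koszul_breaks_at H2D_l2Z (op_minus_scalar M_psi1 l1) (op_minus_scalar M_psi2 l2) 2)"
  using M_psi_unitarily_equivalent_tau taylor_spectrum_M_psi koszul_breaks_at_2_interior by blast

end
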